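(* Let $V$ be a finite set and for each $v\in V$ let $P_v(x)$ be a Bernstein polynomial in $n$ variables. Fix a domain $S\subseteq[0,1]^n$. If $\sum_{v\in V}P_v(x)>0$ for all $x\in S$, then there exists a Bernoulli factory with output set $V$ which terminates almost surely on $S$ and, for every $x\in S$, outputs $v$ with probability $P_v(x)/\sum_{v'\in V}P_{v'}(x)$.
   Context: A Bernstein monomial is $\prod_{i=1}^n x_i^{a_i}(1-x_i)^{b_i}$ with nonnegative integers $a_i,b_i$; a Bernstein polynomial is a finite combination $\sum_j c_jM_j(x)$ of Bernstein monomials with positive coefficients $c_j$. A Bernoulli factory with output set $V$ (for inputs $x\in[0,1]^n$) is a (possibly infinite) rooted binary tree whose internal nodes are labeled by an index $i\in[n]$ or a known constant $c\in(0,1)$ and whose leaves are labeled by elements of $V$; on input $x$ one walks from the root, at a node labeled $i$ flipping a fresh independent coin that is $1$ with probability $x_i$, at a node labeled $c$ a fresh coin of bias $c$, following the edge labeled by the outcome, and outputs the label of the leaf reached; $\mathcal{F}(x)$ is the output ($\emptyset$ if no leaf is reached). It terminates almost surely on $S$ if $\Pr[\mathcal{F}(x)=\emptyset]=0$ for all $x\in S$. *)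

theory Defs
  imports "HOL-Analysis.Analysis"
begin

definition bernstein_monomial :: "nat \<Rightarrow> (nat \<Rightarrow> nat) \<Rightarrow> (nat \<Rightarrow> nat) \<Rightarrow> (nat \<Rightarrow> real) \<Rightarrow> real" where
  "bernstein_monomial n a b x = (\<Prod>i<n. x i ^ a i * (1 - x i) ^ b i)"

definition is_bernstein_poly :: "nat \<Rightarrow> ((nat \<Rightarrow> real) \<Rightarrow> real) \<Rightarrow> bool" where
  "is_bernstein_poly n P \<longleftrightarrow>
     (\<exists>cs :: (real \<times> (nat \<Rightarrow> nat) \<times> (nat \<Rightarrow> nat)) list.
        (\<forall>(c, a, b) \<in> set cs. c > 0) \<and>
        (\<forall>x. P x = (\<Sum>(c, a, b) \<leftarrow> cs. c * bernstein_monomial n a b x)))"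

datatype 'v node = Coin nat | Const real | Leaf 'v

fun is_leaf :: "'v node \<Rightarrow> bool" where
  "is_leaf (Leaf _) = True"
| "is_leaf _ = False"

text \<open>A (possibly infinite) rooted binary tree is given by its labelling of positions
  (finite bit strings, the root being []); position p @ [b] is the child of p along the
  edge labelled by the coin outcome b (True = 1). Only positions reached from the root
  through internal nodes matter.\<close>
type_synonym 'v factory = "bool list \<Rightarrow> 'v node"

definition well_formed_factory :: "nat \<Rightarrow> 'v set \<Rightarrow> 'v factory \<Rightarrow> bool" where
  "well_formed_factory n V T \<longleftrightarrow>
     (\<forall>p. case T p of Coin i \<Rightarrow> i < n | Const c \<Rightarrow> 0 < c \<and> c < 1 | Leaf v \<Rightarrow> v \<in> V)"

definition reachable :: "'v factory \<Rightarrow> bool list \<Rightarrow> bool" where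
  "reachable T p \<longleftrightarrow> (\<forall>k < length p. \<not> is_leaf (T (take k p)))"

fun edge_prob :: "(nat \<Rightarrow> real) \<Rightarrow> 'v node \<Rightarrow> bool \<Rightarrow> real" where
  "edge_prob x (Coin i) b = (if b then x i else 1 - x i)"
| "edge_prob x (Const c) b = (if b then c else 1 - c)"
| "edge_prob x (Leaf _) b = 0"

definition path_prob :: "(nat \<Rightarrow> real) \<Rightarrow> 'v factory \<Rightarrow> bool list \<Rightarrow> real" where
  "path_prob x T p = (\<Prod>k < length p. edge_prob x (T (take k p)) (p ! k))"

definition leaves_with :: "'v factory \<Rightarrow> 'v \<Rightarrow> bool list set" where
  "leaves_with T v = {p. reachable T p \<and> T p = Leaf v}"

definition reached_leaves :: "'v factory \<Rightarrow> bool list set" where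
  "reached_leaves T = {p. reachable T p \<and> is_leaf (T p)}"

definition outputs_with_prob :: "'v factory \<Rightarrow> (nat \<Rightarrow> real) \<Rightarrow> 'v \<Rightarrow> real \<Rightarrow> bool" where
  "outputs_with_prob T x v r \<longleftrightarrow> (path_prob x T has_sum r) (leaves_with T v)"

text \<open>Almost-sure termination on S: Pr[F(x) = empty] = 0, i.e. the probability of
  reaching some leaf is 1.\<close>
definition terminates_as_on :: "'v factory \<Rightarrow> (nat \<Rightarrow> real) set \<Rightarrow> bool" where
  "terminates_as_on T S \<longleftrightarrow> (\<forall>x\<in>S. (path_prob x T has_sum 1) (reached_leaves T))"

end

theory Submission
  imports Defs
begin

text \<open>Merge the polynomials into one list of Bernstein terms \<open>c j * M j\<close> with labels
  \<open>lab j \<in> V\<close>, and let \<open>R = (\<Sum>j. c j)\<close>.  The factory works in rounds of a fixed depth,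
  repeated until a round produces an output.  A round selects term \<open>j\<close> with probability
  \<open>c j / R\<close> through a chain of constant coins, then tests
  \<open>M j = (\<Prod>i. x i ^ a j i * (1 - x i) ^ b j i)\<close> by flipping coin \<open>i\<close> \<open>a j i\<close> times
  expecting 1 and \<open>b j i\<close> times expecting 0, and outputs \<open>lab j\<close> if every test passes.  So a
  round outputs \<open>v\<close> with probability \<open>P v x / R\<close> and fails with probability
  \<open>1 - (\<Sum>v. P v x) / R < 1\<close>; summing the geometric series over the number of failed rounds
  gives the output probabilities \<open>P v x / (\<Sum>v. P v x)\<close>, which add up to 1.\<close>

lemma prod_lessThan_add:
  fixes f :: "nat \<Rightarrow> 'a::comm_monoid_mult"
  shows "(\<Prod>k<m + l. f k) = (\<Prod>k<m. f k) * (\<Prod>k<l. f (m + k))"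
  by (induction l) (simp_all add: mult.assoc)

lemma prod_lessThan_mult:
  fixes f :: "nat \<Rightarrow> 'a::comm_monoid_mult"
  shows "(\<Prod>k<m * l. f k) = (\<Prod>i<m. \<Prod>t<l. f (i * l + t))"
  by (induction m) (simp_all add: prod_lessThan_add add.commute[of l])

lemma prod_lessThan_if_less:
  fixes y :: "'a::comm_monoid_mult"
  assumes "m \<le> l"
  shows "(\<Prod>t<l. if t < m then y else 1) = y ^ m"
proof -
  have "(\<Prod>t<l. if t < m then y else 1) = (\<Prod>t<m + (l - m). if t < m then y else 1)"
    using assms by simp
  also have "\<dots> = y ^ m"
    by (subst prod_lessThan_add) simp
  finally show ?thesis .
qed

lemma sum_list_map_concat:
  "sum_list (map f (concat xss)) = sum_list (map (\<lambda>xs. sum_list (map f xs)) xss)"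
  by (induction xss) simp_all

lemma has_sum_UN_disjoint_nonneg:
  fixes f :: "'a \<Rightarrow> real"
  assumes f: "\<And>i. i \<in> I \<Longrightarrow> (f has_sum g i) (A i)"
    and g: "(g has_sum s) I"
    and nonneg: "\<And>i y. i \<in> I \<Longrightarrow> y \<in> A i \<Longrightarrow> 0 \<le> f y"
    and disjoint: "disjoint_family_on A I"
  shows "(f has_sum s) (\<Union>i\<in>I. A i)"
proof -
  have summable: "(f \<circ> snd) summable_on Sigma I A"
    using f g nonneg by (intro summable_on_SigmaI[where g = g]) (auto dest: has_sum_imp_summable)
  have "((f \<circ> snd) has_sum s) (Sigma I A)"
    by (rule has_sum_SigmaI[OF _ g summable]) (use f in auto)
  also have "?this \<longleftrightarrow> (f has_sum s) (snd ` Sigma I A)" using disjoint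
    by (subst has_sum_reindex; force simp: disjoint_family_on_def inj_on_def)
  also have "snd ` Sigma I A = (\<Union>i\<in>I. A i)"
    by force
  finally show ?thesis .
qed

lemma finite_bool_lists_length: "finite {q :: bool list. length q = D}"
  using finite_lists_length_eq[of "UNIV :: bool set" D] by simp

lemma sum_bool_lists_prod:
  fixes h :: "nat \<Rightarrow> bool \<Rightarrow> 'a::comm_semiring_1"
  shows "(\<Sum>q | length q = D. \<Prod>k<D. h k (q ! k)) = (\<Prod>k<D. h k True + h k False)"
proof (induction D arbitrary: h)
  case 0
  then show ?case by simp
next
  case (Suc D)
  have lists_Suc: "{q :: bool list. length q = Suc D} = (\<lambda>(b, q). b # q) ` (UNIV \<times> {q. length q = D})"
    by (auto simp: length_Suc_conv)
  have inj: "inj_on (\<lambda>(b, q). b # q) (UNIV \<times> {q :: bool list. length q = D})"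
    by (auto simp: inj_on_def)
  have "(\<Sum>q | length q = Suc D. \<Prod>k<Suc D. h k (q ! k))
      = (\<Sum>(b, q) \<in> UNIV \<times> {q. length q = D}. h 0 b * (\<Prod>k<D. h (Suc k) (q ! k)))"
    unfolding lists_Suc
    by (subst sum.reindex[OF inj]) (simp add: case_prod_unfold prod.lessThan_Suc_shift del: prod.lessThan_Suc)
  also have "\<dots> = (\<Sum>b\<in>UNIV. h 0 b) * (\<Sum>q | length q = D. \<Prod>k<D. h (Suc k) (q ! k))"
    by (simp add: sum_product sum.cartesian_product)
  also have "\<dots> = (\<Prod>k<Suc D. h k True + h k False)"
    using Suc[of "\<lambda>k. h (Suc k)"]
    by (simp add: UNIV_bool add.commute prod.lessThan_Suc_shift del: prod.lessThan_Suc)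
  finally show ?case .
qed

definition agrees :: "(nat \<Rightarrow> bool option) \<Rightarrow> bool list \<Rightarrow> bool" where
  "agrees r q \<longleftrightarrow> (\<forall>k < length q. r k = None \<or> r k = Some (q ! k))"

lemma sum_agreeing_lists_prod:
  fixes w :: "nat \<Rightarrow> bool \<Rightarrow> 'a::comm_semiring_1"
  shows "(\<Sum>q | length q = D \<and> agrees r q. \<Prod>k<D. w k (q ! k)) =
         (\<Prod>k<D. case r k of None \<Rightarrow> w k True + w k False | Some b \<Rightarrow> w k b)"
proof -
  define h where "h k b = (if r k = None \<or> r k = Some b then w k b else 0)" for k b
  have restrict: "(\<Prod>k<D. h k (q ! k)) = (if agrees r q then \<Prod>k<D. w k (q ! k) else 0)"
    if len: "length q = D" for q
  proof (cases "agrees r q")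
    case True
    then show ?thesis using len by (auto simp: agrees_def h_def intro!: prod.cong)
  next
    case False
    then obtain k where k: "k < D" "r k \<noteq> None" "r k \<noteq> Some (q ! k)"
      using len unfolding agrees_def by blast
    have "(\<Prod>k<D. h k (q ! k)) = 0"
      by (rule prod_zero) (use k in \<open>auto simp: h_def intro!: bexI[of _ k]\<close>)
    then show ?thesis using False by simp
  qed
  have "(\<Sum>q | length q = D \<and> agrees r q. \<Prod>k<D. w k (q ! k))
      = (\<Sum>q | length q = D. \<Prod>k<D. h k (q ! k))"
    using finite_bool_lists_length by (simp add: restrict sum.inter_filter[symmetric] conj_commute)
  also have "\<dots> = (\<Prod>k<D. h k True + h k False)"
    by (rule sum_bool_lists_prod)
  also have "\<dots> = (\<Prod>k<D. case r k of None \<Rightarrow> w k True + w k False | Some b \<Rightarrow> w k b)"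
    by (intro prod.cong refl) (auto simp: h_def split: option.split)
  finally show ?thesis .
qed

section \<open>Repeating a round until it produces an output\<close>

definition valid_node :: "nat \<Rightarrow> 'v set \<Rightarrow> 'v node \<Rightarrow> bool" where
  "valid_node n V nd \<longleftrightarrow> (case nd of Coin i \<Rightarrow> i < n | Const c \<Rightarrow> 0 < c \<and> c < 1 | Leaf v \<Rightarrow> v \<in> V)"

lemma well_formed_factory_iff_valid_node:
  "well_formed_factory n V T \<longleftrightarrow> (\<forall>p. valid_node n V (T p))"
  by (simp add: well_formed_factory_def valid_node_def)

lemma edge_prob_nonneg:
  assumes "valid_node n V nd" and "\<forall>i<n. 0 \<le> x i \<and> x i \<le> 1"
  shows "0 \<le> edge_prob x nd b"
  using assms by (cases nd) (auto simp: valid_node_def)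

lemma edge_prob_True_False: "\<not> is_leaf nd \<Longrightarrow> edge_prob x nd True + edge_prob x nd False = 1"
  by (cases nd) auto

definition block :: "nat \<Rightarrow> 'a list \<Rightarrow> nat \<Rightarrow> 'a list" where
  "block D p j = take D (drop (j * D) p)"

text \<open>The walk performs rounds of \<open>D\<close> flips, labelled by \<open>lev\<close> level by level, until the
  bits of a round yield an output.  Positions after that round are never reached; labelling
  them \<open>Const (1/2)\<close> keeps the tree well formed.\<close>
definition repeat_rounds :: "nat \<Rightarrow> (nat \<Rightarrow> 'v node) \<Rightarrow> (bool list \<Rightarrow> 'v option) \<Rightarrow> 'v factory" where
  "repeat_rounds D lev out p =
     (if \<forall>j < length p div D. out (block D p j) = None then lev (length p mod D)
      else if length p mod D = 0 \<and> (\<forall>j < length p div D - 1. out (block D p j) = None)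
      then Leaf (the (out (block D p (length p div D - 1))))
      else Const (1/2))"

definition periodic_path_prob :: "nat \<Rightarrow> (nat \<Rightarrow> 'v node) \<Rightarrow> (nat \<Rightarrow> real) \<Rightarrow> bool list \<Rightarrow> real" where
  "periodic_path_prob D lev x p = (\<Prod>k<length p. edge_prob x (lev (k mod D)) (p ! k))"

definition round_prob :: "nat \<Rightarrow> (nat \<Rightarrow> 'v node) \<Rightarrow> (nat \<Rightarrow> real) \<Rightarrow> (bool list \<Rightarrow> bool) \<Rightarrow> real" where
  "round_prob D lev x Q = (\<Sum>q | length q = D \<and> Q q. \<Prod>k<D. edge_prob x (lev k) (q ! k))"

definition stopping_paths :: "nat \<Rightarrow> (bool list \<Rightarrow> 'v option) \<Rightarrow> (bool list \<Rightarrow> bool) \<Rightarrow> nat \<Rightarrow> bool list set" where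
  "stopping_paths D out Q m =
     {p. length p = Suc m * D \<and> (\<forall>j<m. out (block D p j) = None) \<and> Q (block D p m)}"

lemma block_append_0: "length q = D \<Longrightarrow> block D (q @ p) 0 = q"
  by (simp add: block_def)

lemma block_append_Suc: "length q = D \<Longrightarrow> block D (q @ p) (Suc j) = block D p j"
  by (simp add: block_def add.commute)

lemma block_Suc: "block D p (Suc j) = block D (drop D p) j"
  by (simp add: block_def add.commute)

lemma block_take: "Suc j * D \<le> k \<Longrightarrow> block D (take k p) j = block D p j"
  by (simp add: block_def drop_take min_def)

lemma periodic_path_prob_round:
  "length q = D \<Longrightarrow> periodic_path_prob D lev x q = (\<Prod>k<D. edge_prob x (lev k) (q ! k))"
  by (simp add: periodic_path_prob_def)

lemma periodic_path_prob_append: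
  assumes "length q = D"
  shows "periodic_path_prob D lev x (q @ p) = periodic_path_prob D lev x q * periodic_path_prob D lev x p"
proof -
  let ?f = "\<lambda>k. edge_prob x (lev (k mod D)) ((q @ p) ! k)"
  have "periodic_path_prob D lev x (q @ p) = (\<Prod>k<D. ?f k) * (\<Prod>k<length p. ?f (D + k))"
    using assms by (simp add: periodic_path_prob_def prod_lessThan_add)
  also have "(\<Prod>k<D. ?f k) = periodic_path_prob D lev x q"
    using assms by (simp add: periodic_path_prob_def nth_append)
  also have "(\<Prod>k<length p. ?f (D + k)) = periodic_path_prob D lev x p"
    using assms by (simp add: periodic_path_prob_def nth_append)
  finally show ?thesis .
qed

lemma round_prob_cong:
  "(\<And>q. length q = D \<Longrightarrow> Q q \<longleftrightarrow> Q' q) \<Longrightarrow> round_prob D lev x Q = round_prob D lev x Q'"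
  unfolding round_prob_def by (intro sum.cong) auto

lemma stopping_paths_0: "stopping_paths D out Q 0 = {p. length p = D \<and> Q p}"
  by (auto simp: stopping_paths_def block_def)

lemma stopping_paths_Suc:
  "stopping_paths D out Q (Suc m) =
     (\<lambda>(q, p). q @ p) ` ({q. length q = D \<and> out q = None} \<times> stopping_paths D out Q m)"
proof (intro equalityI subsetI)
  fix p' assume p': "p' \<in> stopping_paths D out Q (Suc m)"
  have "take D p' \<in> {q. length q = D \<and> out q = None}" "drop D p' \<in> stopping_paths D out Q m"
    using p' block_Suc[of D p'] by (auto simp: stopping_paths_def block_def[of D p' 0])
  then show "p' \<in> (\<lambda>(q, p). q @ p) ` ({q. length q = D \<and> out q = None} \<times> stopping_paths D out Q m)"
    by (intro image_eqI[of _ _ "(take D p', drop D p')"]) auto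
next
  fix p' assume "p' \<in> (\<lambda>(q, p). q @ p) ` ({q. length q = D \<and> out q = None} \<times> stopping_paths D out Q m)"
  then obtain q p where qp: "p' = q @ p" "length q = D" "out q = None" "p \<in> stopping_paths D out Q m"
    by auto
  have "out (block D p' j) = None" if "j < Suc m" for j
    using qp that by (cases j) (auto simp: block_append_Suc block_append_0 stopping_paths_def)
  then show "p' \<in> stopping_paths D out Q (Suc m)"
    using qp by (simp add: stopping_paths_def block_append_Suc)
qed

lemma finite_stopping_paths: "finite (stopping_paths D out Q m)"
  by (rule finite_subset[OF _ finite_bool_lists_length[of "Suc m * D"]]) (auto simp: stopping_paths_def)

lemma sum_stopping_paths:
  "(\<Sum>p\<in>stopping_paths D out Q m. periodic_path_prob D lev x p) =
     round_prob D lev x (\<lambda>q. out q = None) ^ m * round_prob D lev x Q"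
proof (induction m)
  case 0
  have "(\<Sum>p | length p = D \<and> Q p. periodic_path_prob D lev x p) = round_prob D lev x Q"
    unfolding round_prob_def by (intro sum.cong refl) (simp add: periodic_path_prob_round)
  then show ?case by (simp add: stopping_paths_0)
next
  case (Suc m)
  let ?N = "{q. length q = D \<and> out q = None}" and ?S = "stopping_paths D out Q m"
  have inj: "inj_on (\<lambda>(q, p). q @ p) (?N \<times> ?S)"
    by (auto simp: inj_on_def)
  have "(\<Sum>p\<in>stopping_paths D out Q (Suc m). periodic_path_prob D lev x p)
      = (\<Sum>(q, p)\<in>?N \<times> ?S. periodic_path_prob D lev x (q @ p))"
    unfolding stopping_paths_Suc by (subst sum.reindex[OF inj]) (simp add: case_prod_unfold)
  also have "\<dots> = (\<Sum>(q, p)\<in>?N \<times> ?S. periodic_path_prob D lev x q * periodic_path_prob D lev x p)"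
    by (intro sum.cong refl) (auto simp: periodic_path_prob_append)
  also have "\<dots> = (\<Sum>q\<in>?N. periodic_path_prob D lev x q) * (\<Sum>p\<in>?S. periodic_path_prob D lev x p)"
    by (simp add: sum_product sum.cartesian_product)
  also have "(\<Sum>q\<in>?N. periodic_path_prob D lev x q) = round_prob D lev x (\<lambda>q. out q = None)"
    unfolding round_prob_def by (intro sum.cong refl) (simp add: periodic_path_prob_round)
  finally show ?case using Suc by simp
qed

lemma has_sum_stopping_paths:
  assumes nonneg: "\<And>k b. k < D \<Longrightarrow> 0 \<le> edge_prob x (lev k) b"
    and D: "0 < D" and failure: "round_prob D lev x (\<lambda>q. out q = None) < 1"
  shows "(periodic_path_prob D lev x has_sum
           round_prob D lev x Q / (1 - round_prob D lev x (\<lambda>q. out q = None)))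
         (\<Union>m. stopping_paths D out Q m)"
proof -
  let ?\<rho> = "round_prob D lev x (\<lambda>q. out q = None)" and ?g = "round_prob D lev x Q"
  have path_nonneg: "0 \<le> periodic_path_prob D lev x p" for p
    unfolding periodic_path_prob_def using D by (intro prod_nonneg) (simp add: nonneg)
  have round_nonneg: "0 \<le> round_prob D lev x Q'" for Q'
    unfolding round_prob_def by (intro sum_nonneg prod_nonneg) (simp add: nonneg)
  have "(\<lambda>m. ?\<rho> ^ m * ?g) sums (?g / (1 - ?\<rho>))"
    using geometric_sums[of ?\<rho>] sums_mult2[of "\<lambda>m. ?\<rho> ^ m" "1 / (1 - ?\<rho>)" ?g] failure round_nonneg
    by simp
  then have "((\<lambda>m. ?\<rho> ^ m * ?g) has_sum (?g / (1 - ?\<rho>))) UNIV"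
    by (rule sums_nonneg_imp_has_sum) (simp add: round_nonneg)
  then show ?thesis
  proof (rule has_sum_UN_disjoint_nonneg[rotated])
    show "(periodic_path_prob D lev x has_sum ?\<rho> ^ m * ?g) (stopping_paths D out Q m)" for m
      by (rule has_sum_finiteI[OF finite_stopping_paths]) (simp add: sum_stopping_paths)
    show "disjoint_family_on (stopping_paths D out Q) UNIV"
      using D by (auto simp: disjoint_family_on_def stopping_paths_def)
  qed (simp add: path_nonneg)
qed

lemma repeat_rounds_prefix:
  assumes D: "0 < D" and p: "p \<in> stopping_paths D out Q m" and k: "k < length p"
  shows "repeat_rounds D lev out (take k p) = lev (k mod D)"
proof -
  have "k div D < Suc m"
    using p k D by (simp add: stopping_paths_def div_less_iff_less_mult)
  then have "out (block D (take k p) j) = None" if "j < k div D" for j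
  proof -
    have "Suc j * D \<le> k div D * D"
      using that by (intro mult_right_mono) simp_all
    also have "\<dots> \<le> k" by simp
    finally have "block D (take k p) j = block D p j" by (rule block_take)
    moreover have "j < m"
      using that \<open>k div D < Suc m\<close> by simp
    ultimately show ?thesis using p by (simp add: stopping_paths_def)
  qed
  then show ?thesis using k by (simp add: repeat_rounds_def)
qed

lemma repeat_rounds_stopping_path:
  assumes D: "0 < D" and p: "p \<in> stopping_paths D out Q m" and Q: "\<And>q. Q q \<Longrightarrow> out q \<noteq> None"
  shows "repeat_rounds D lev out p = Leaf (the (out (block D p m)))"
proof -
  have len: "length p = Suc m * D" and none: "\<forall>j<m. out (block D p j) = None"
    and last: "Q (block D p m)"
    using p by (auto simp: stopping_paths_def)
  have "length p div D = Suc m" "length p mod D = 0"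
    using len D by simp_all
  then show ?thesis using none Q[OF last] unfolding repeat_rounds_def by auto
qed

lemma reachable_stopping_path:
  assumes "0 < D" and "\<And>k. k < D \<Longrightarrow> \<not> is_leaf (lev k)" and "p \<in> stopping_paths D out Q m"
  shows "reachable (repeat_rounds D lev out) p"
  using assms repeat_rounds_prefix[OF assms(1,3)] by (simp add: reachable_def)

lemma path_prob_stopping_path:
  assumes "0 < D" and "p \<in> stopping_paths D out Q m"
  shows "path_prob x (repeat_rounds D lev out) p = periodic_path_prob D lev x p"
  unfolding path_prob_def periodic_path_prob_def
  by (intro prod.cong refl) (simp add: repeat_rounds_prefix[OF assms])

lemma repeat_rounds_LeafD:
  assumes D: "0 < D" and lev: "\<And>k. k < D \<Longrightarrow> \<not> is_leaf (lev k)"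
    and leaf: "repeat_rounds D lev out p = Leaf v"
  shows "\<exists>m. p \<in> stopping_paths D out (\<lambda>q. out q = Some v) m"
proof -
  let ?M = "length p div D"
  have not_first: "\<not> (\<forall>j < ?M. out (block D p j) = None)"
  proof
    assume "\<forall>j < ?M. out (block D p j) = None"
    then have "repeat_rounds D lev out p = lev (length p mod D)"
      by (simp add: repeat_rounds_def)
    moreover have "\<not> is_leaf (lev (length p mod D))"
      using lev D by simp
    ultimately show False using leaf by (metis is_leaf.simps(1))
  qed
  have "(if length p mod D = 0 \<and> (\<forall>j < ?M - 1. out (block D p j) = None)
      then Leaf (the (out (block D p (?M - 1)))) else Const (1/2)) = Leaf v"
    using leaf unfolding repeat_rounds_def if_not_P[OF not_first] .
  then have last: "length p mod D = 0" "\<forall>j < ?M - 1. out (block D p j) = None"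
    and v: "the (out (block D p (?M - 1))) = v"
    by (auto split: if_split_asm)
  obtain m where m: "?M = Suc m"
    using not_first by (cases ?M) auto
  have "out (block D p m) \<noteq> None"
    using not_first last(2) m by (metis diff_Suc_1 less_Suc_eq)
  then have "out (block D p m) = Some v"
    using v m by auto
  moreover have "length p = Suc m * D"
    using m last(1) div_mult_mod_eq[of "length p" D] by simp
  ultimately have "p \<in> stopping_paths D out (\<lambda>q. out q = Some v) m"
    using last(2) m by (simp add: stopping_paths_def)
  then show ?thesis ..
qed

lemma leaves_with_repeat_rounds:
  assumes D: "0 < D" and lev: "\<And>k. k < D \<Longrightarrow> \<not> is_leaf (lev k)"
  shows "leaves_with (repeat_rounds D lev out) v = (\<Union>m. stopping_paths D out (\<lambda>q. out q = Some v) m)"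
proof (intro equalityI subsetI)
  fix p assume "p \<in> leaves_with (repeat_rounds D lev out) v"
  then show "p \<in> (\<Union>m. stopping_paths D out (\<lambda>q. out q = Some v) m)"
    using repeat_rounds_LeafD[where lev = lev, OF D lev] by (auto simp: leaves_with_def)
next
  fix p assume "p \<in> (\<Union>m. stopping_paths D out (\<lambda>q. out q = Some v) m)"
  then obtain m where p: "p \<in> stopping_paths D out (\<lambda>q. out q = Some v) m" by auto
  then have "repeat_rounds D lev out p = Leaf v"
    using repeat_rounds_stopping_path[OF D p] by (simp add: stopping_paths_def)
  then show "p \<in> leaves_with (repeat_rounds D lev out) v"
    using reachable_stopping_path[where lev = lev, OF D lev p] by (simp add: leaves_with_def)
qed

lemma reached_leaves_repeat_rounds:
  assumes D: "0 < D" and lev: "\<And>k. k < D \<Longrightarrow> \<not> is_leaf (lev k)"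
  shows "reached_leaves (repeat_rounds D lev out) = (\<Union>m. stopping_paths D out (\<lambda>q. out q \<noteq> None) m)"
proof (intro equalityI subsetI)
  fix p assume "p \<in> reached_leaves (repeat_rounds D lev out)"
  then obtain v where "repeat_rounds D lev out p = Leaf v"
    by (cases "repeat_rounds D lev out p") (simp_all add: reached_leaves_def)
  then obtain m where "p \<in> stopping_paths D out (\<lambda>q. out q = Some v) m"
    using repeat_rounds_LeafD[where lev = lev, OF D lev] by blast
  then show "p \<in> (\<Union>m. stopping_paths D out (\<lambda>q. out q \<noteq> None) m)"
    by (auto simp: stopping_paths_def)
next
  fix p assume "p \<in> (\<Union>m. stopping_paths D out (\<lambda>q. out q \<noteq> None) m)"
  then obtain m where p: "p \<in> stopping_paths D out (\<lambda>q. out q \<noteq> None) m" by auto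
  then show "p \<in> reached_leaves (repeat_rounds D lev out)"
    using repeat_rounds_stopping_path[OF D p] reachable_stopping_path[where lev = lev, OF D lev p]
    by (simp add: reached_leaves_def)
qed

lemma repeat_rounds_cases:
  "repeat_rounds D lev out p = lev (length p mod D) \<or> repeat_rounds D lev out p = Const (1/2) \<or>
   is_leaf (repeat_rounds D lev out p)"
  by (simp add: repeat_rounds_def)

lemma well_formed_repeat_rounds:
  assumes D: "0 < D" and lev: "\<And>k. k < D \<Longrightarrow> valid_node n V (lev k) \<and> \<not> is_leaf (lev k)"
    and out: "\<And>q v. out q = Some v \<Longrightarrow> v \<in> V"
  shows "well_formed_factory n V (repeat_rounds D lev out)"
  unfolding well_formed_factory_iff_valid_node
proof
  fix p
  show "valid_node n V (repeat_rounds D lev out p)"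
  proof (cases "is_leaf (repeat_rounds D lev out p)")
    case True
    then obtain v where leaf: "repeat_rounds D lev out p = Leaf v"
      by (cases "repeat_rounds D lev out p") simp_all
    have "\<And>k. k < D \<Longrightarrow> \<not> is_leaf (lev k)"
      using lev by blast
    then obtain m where "p \<in> stopping_paths D out (\<lambda>q. out q = Some v) m"
      using repeat_rounds_LeafD[where lev = lev, OF D _ leaf] by blast
    then show ?thesis using leaf out by (auto simp: stopping_paths_def valid_node_def)
  next
    case False
    have "length p mod D < D" using D by simp
    then show ?thesis
      using False lev repeat_rounds_cases[of D lev out p] by (auto simp: valid_node_def)
  qed
qed

lemma round_prob_not:
  assumes "\<And>k. k < D \<Longrightarrow> \<not> is_leaf (lev k)"
  shows "round_prob D lev x (\<lambda>q. \<not> Q q) = 1 - round_prob D lev x Q"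
proof -
  let ?f = "\<lambda>q. \<Prod>k<D. edge_prob x (lev k) (q ! k)"
  have "round_prob D lev x Q + round_prob D lev x (\<lambda>q. \<not> Q q)
      = (\<Sum>q\<in>{q. length q = D \<and> Q q} \<union> {q. length q = D \<and> \<not> Q q}. ?f q)"
    unfolding round_prob_def
    by (rule sum.union_disjoint[symmetric]) (auto intro: finite_subset[OF _ finite_bool_lists_length])
  also have "\<dots> = (\<Sum>q | length q = D. ?f q)"
    by (rule sum.cong) auto
  also have "\<dots> = (\<Prod>k<D. edge_prob x (lev k) True + edge_prob x (lev k) False)"
    by (rule sum_bool_lists_prod)
  also have "\<dots> = 1"
    using assms by (simp add: edge_prob_True_False)
  finally show ?thesis by simp
qed

theorem repeat_rounds_has_sum:
  assumes D: "0 < D" and lev: "\<And>k. k < D \<Longrightarrow> \<not> is_leaf (lev k)"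
    and nonneg: "\<And>k b. k < D \<Longrightarrow> 0 \<le> edge_prob x (lev k) b"
    and stops: "0 < round_prob D lev x (\<lambda>q. out q \<noteq> None)"
  shows "(path_prob x (repeat_rounds D lev out) has_sum 1) (reached_leaves (repeat_rounds D lev out))"
    and "(path_prob x (repeat_rounds D lev out) has_sum
          round_prob D lev x (\<lambda>q. out q = Some v) / round_prob D lev x (\<lambda>q. out q \<noteq> None))
         (leaves_with (repeat_rounds D lev out) v)"
proof -
  define \<sigma> where "\<sigma> = round_prob D lev x (\<lambda>q. out q \<noteq> None)"
  have \<sigma>_pos: "0 < \<sigma>"
    unfolding \<sigma>_def by (rule stops)
  have failure: "round_prob D lev x (\<lambda>q. out q = None) = 1 - \<sigma>"
    using round_prob_not[OF lev, where x = x and Q = "\<lambda>q. out q = None"] by (simp add: \<sigma>_def)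
  have geometric: "(path_prob x (repeat_rounds D lev out) has_sum round_prob D lev x Q / \<sigma>)
      (\<Union>m. stopping_paths D out Q m)" for Q
  proof -
    have "(periodic_path_prob D lev x has_sum
        round_prob D lev x Q / (1 - round_prob D lev x (\<lambda>q. out q = None))) (\<Union>m. stopping_paths D out Q m)"
      using \<sigma>_pos by (intro has_sum_stopping_paths nonneg D) (simp_all add: failure)
    then have "(periodic_path_prob D lev x has_sum round_prob D lev x Q / \<sigma>) (\<Union>m. stopping_paths D out Q m)"
      by (simp add: failure)
    then show ?thesis
      by (subst has_sum_cong[where g = "periodic_path_prob D lev x"]) (auto simp: path_prob_stopping_path[OF D])
  qed
  show "(path_prob x (repeat_rounds D lev out) has_sum 1) (reached_leaves (repeat_rounds D lev out))"
    using geometric[of "\<lambda>q. out q \<noteq> None"] stops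
    by (simp add: reached_leaves_repeat_rounds[where lev = lev, OF D lev] \<sigma>_def)
  show "(path_prob x (repeat_rounds D lev out) has_sum
          round_prob D lev x (\<lambda>q. out q = Some v) / round_prob D lev x (\<lambda>q. out q \<noteq> None))
         (leaves_with (repeat_rounds D lev out) v)"
    using geometric[of "\<lambda>q. out q = Some v"] by (simp add: leaves_with_repeat_rounds[where lev = lev, OF D lev] \<sigma>_def)
qed

section \<open>One round for a list of labelled Bernstein terms\<close>

locale bernstein_terms =
  fixes n J :: nat and c :: "nat \<Rightarrow> real" and a b :: "nat \<Rightarrow> nat \<Rightarrow> nat" and lab :: "nat \<Rightarrow> 'v"
  assumes J_pos: "0 < J" and c_pos: "\<And>j. j < J \<Longrightarrow> 0 < c j"
begin

definition R :: "nat \<Rightarrow> real" where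
  "R l = (\<Sum>m\<in>{l..<J}. c m)"

definition K :: nat where
  "K = (\<Sum>j<J. \<Sum>i<n. a j i + b j i)"

definition D :: nat where
  "D = J + n * (2 * K)"

text \<open>Level \<open>0\<close> is a dummy flip that keeps \<open>D\<close> positive.  Term
  \<open>j\<close> is selected when levels \<open>1, \<dots>, j\<close> show 0 and level \<open>j + 1\<close> (if \<open>j + 1 < J\<close>) shows 1;
  as level \<open>k \<in> {1..<J}\<close> shows 1 with probability \<open>c (k - 1) / R (k - 1)\<close>, this happens with
  probability \<open>c j / R 0\<close>.  Variable \<open>i\<close> owns the \<open>2 * K\<close> levels from
  \<open>J + i * (2 * K)\<close> on, all flipping coin \<open>i\<close>: term \<open>j\<close> requires the first \<open>a j i\<close> of the
  first \<open>K\<close> of them to show 1 and the first \<open>b j i\<close> of the last \<open>K\<close> to show 0.\<close>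
definition lev :: "nat \<Rightarrow> 'v node" where
  "lev k = (if k = 0 then Const (1/2)
     else if k < J then Const (c (k - 1) / R (k - 1))
     else Coin ((k - J) div (2 * K)))"

definition required :: "nat \<Rightarrow> nat \<Rightarrow> bool option" where
  "required j k = (if k = 0 then None
     else if k < J then (if k \<le> Suc j then Some (k = Suc j) else None)
     else if (k - J) mod (2 * K) < K
       then (if (k - J) mod (2 * K) < a j ((k - J) div (2 * K)) then Some True else None)
     else if (k - J) mod (2 * K) - K < b j ((k - J) div (2 * K)) then Some False else None)"

definition out :: "bool list \<Rightarrow> 'v option" where
  "out q = (if \<exists>j<J. agrees (required j) q
     then Some (lab (SOME j. j < J \<and> agrees (required j) q)) else None)"

definition match_prob :: "(nat \<Rightarrow> real) \<Rightarrow> nat \<Rightarrow> nat \<Rightarrow> real" where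
  "match_prob x j k = (case required j k of None \<Rightarrow> 1 | Some d \<Rightarrow> edge_prob x (lev k) d)"

lemma D_pos: "0 < D"
  using J_pos by (simp add: D_def)

lemma R_Suc: "l < J \<Longrightarrow> R l = c l + R (Suc l)"
  by (simp add: R_def sum.atLeast_Suc_lessThan)

lemma R_pos: "l < J \<Longrightarrow> 0 < R l"
proof -
  assume l: "l < J"
  have "0 \<le> R (Suc l)"
    unfolding R_def by (rule sum_nonneg) (simp add: less_imp_le c_pos)
  then show ?thesis using R_Suc[OF l] c_pos[OF l] by simp
qed

lemma required_0: "required j 0 = None"
  by (simp add: required_def)

lemma required_selection:
  "0 < k \<Longrightarrow> k < J \<Longrightarrow> required j k = (if k \<le> Suc j then Some (k = Suc j) else None)"
  by (simp add: required_def)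

lemma lev_selection: "0 < k \<Longrightarrow> k < J \<Longrightarrow> lev k = Const (c (k - 1) / R (k - 1))"
  by (simp add: lev_def)

lemma required_lev_test:
  assumes "t < 2 * K"
  shows "required j (J + (i * (2 * K) + t)) =
      (if t < K then (if t < a j i then Some True else None)
       else if t - K < b j i then Some False else None)"
    and "lev (J + (i * (2 * K) + t)) = Coin i"
proof -
  let ?k = "J + (i * (2 * K) + t)"
  have "(?k - J) div (2 * K) = i" "(?k - J) mod (2 * K) = t" "?k \<noteq> 0" "\<not> ?k < J"
    using assms J_pos by simp_all
  then show "required j ?k =
      (if t < K then (if t < a j i then Some True else None)
       else if t - K < b j i then Some False else None)"
    and "lev ?k = Coin i"
    unfolding required_def lev_def by (simp_all only: if_False)
qed

lemma lev_not_leaf: "\<not> is_leaf (lev k)"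
  by (simp add: lev_def)

lemma lev_valid:
  assumes "k < D"
  shows "valid_node n V (lev k)"
proof -
  consider "k = 0" | "0 < k" "k < J" | "J \<le> k" by linarith
  then show ?thesis
  proof cases
    case 1
    then show ?thesis by (simp add: lev_def valid_node_def)
  next
    case 2
    then have "R (k - 1) = c (k - 1) + R k" "0 < R k" "0 < c (k - 1)"
      using R_Suc[of "k - 1"] R_pos[of k] c_pos[of "k - 1"] by auto
    then have "0 < c (k - 1) / R (k - 1)" "c (k - 1) / R (k - 1) < 1"
      by (simp_all add: field_simps)
    then show ?thesis using 2 by (simp add: lev_def valid_node_def)
  next
    case 3
    then have "(k - J) div (2 * K) < n"
      using assms by (simp add: D_def less_mult_imp_div_less)
    then show ?thesis using 3 J_pos by (simp add: lev_def valid_node_def)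
  qed
qed

lemma agrees_required_unique:
  assumes "length q = D" and "j < J" "j' < J" and "agrees (required j) q" "agrees (required j') q"
  shows "j = j'"
proof -
  have False if "i < i'" "i' < J" "agrees (required i) q" "agrees (required i') q" for i i'
  proof -
    have "Suc i < length q"
      using that assms(1) by (simp add: D_def)
    moreover have "required i (Suc i) = Some True" "required i' (Suc i) = Some False"
      using that by (auto simp: required_def)
    ultimately show False
      using that unfolding agrees_def by force
  qed
  then show ?thesis
    using assms by (metis linorder_neqE_nat)
qed

lemma out_SomeD:
  assumes "out q = Some v"
  shows "\<exists>j<J. lab j = v \<and> agrees (required j) q"
proof -
  have ex: "\<exists>j. j < J \<and> agrees (required j) q"
    using assms by (auto simp: out_def split: if_split_asm)
  then have "lab (SOME j. j < J \<and> agrees (required j) q) = v"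
    using assms by (simp add: out_def)
  with someI_ex[OF ex] show ?thesis by blast
qed

lemma out_eq_Some_iff:
  assumes "length q = D"
  shows "out q = Some v \<longleftrightarrow> (\<exists>j<J. lab j = v \<and> agrees (required j) q)"
proof
  assume "\<exists>j<J. lab j = v \<and> agrees (required j) q"
  then obtain j where j: "j < J" "lab j = v" "agrees (required j) q"
    by blast
  have "(SOME j. j < J \<and> agrees (required j) q) = j"
    using j agrees_required_unique[OF assms] by (intro some_equality) auto
  then show "out q = Some v"
    using j by (auto simp: out_def)
qed (rule out_SomeD)

lemma round_prob_agrees:
  "round_prob D lev x (agrees (required j)) = (\<Prod>k<D. match_prob x j k)"
proof -
  have "round_prob D lev x (agrees (required j)) =
      (\<Prod>k<D. case required j k of None \<Rightarrow> edge_prob x (lev k) True + edge_prob x (lev k) False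
                                  | Some d \<Rightarrow> edge_prob x (lev k) d)"
    unfolding round_prob_def by (rule sum_agreeing_lists_prod[where w = "\<lambda>k. edge_prob x (lev k)"])
  also have "\<dots> = (\<Prod>k<D. match_prob x j k)"
    by (intro prod.cong refl)
      (simp add: match_prob_def edge_prob_True_False lev_not_leaf split: option.split)
  finally show ?thesis .
qed

lemma prod_continue_prob: "j \<le> J \<Longrightarrow> (\<Prod>l<j. 1 - c l / R l) = R j / R 0"
proof (induction j)
  case 0
  then show ?case using R_pos[OF J_pos] by simp
next
  case (Suc j)
  then have j: "j < J" by simp
  have "(\<Prod>l<Suc j. 1 - c l / R l) = R j / R 0 * (1 - c j / R j)"
    using Suc by simp
  also have "\<dots> = (R j - c j) / R 0"
    using R_pos[OF j] R_pos[OF J_pos] by (simp add: field_simps)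
  also have "\<dots> = R (Suc j) / R 0"
    using R_Suc[OF j] by simp
  finally show ?case .
qed

lemma prod_match_prob_selection:
  assumes j: "j < J"
  shows "(\<Prod>k<J. match_prob x j k) = c j / R 0"
proof -
  have selected: "(\<Prod>k<Suc j. match_prob x j k) = R j / R 0"
  proof -
    have "(\<Prod>k<Suc j. match_prob x j k) = (\<Prod>l<j. match_prob x j (Suc l))"
      by (simp add: prod.lessThan_Suc_shift match_prob_def required_0 del: prod.lessThan_Suc)
    also have "\<dots> = (\<Prod>l<j. 1 - c l / R l)"
      using j by (intro prod.cong refl) (simp add: match_prob_def required_selection lev_selection)
    finally show ?thesis using j by (simp add: prod_continue_prob)
  qed
  have stopped: "(\<Prod>t<J - Suc j. match_prob x j (Suc j + t)) = c j / R j"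
  proof (cases "Suc j = J")
    case True
    then show ?thesis using R_Suc[OF j] R_pos[OF j] by (simp add: R_def)
  next
    case False
    then obtain m where m: "J - Suc j = Suc m" using j by (cases "J - Suc j") auto
    have "(\<Prod>t<Suc m. match_prob x j (Suc j + t))
        = match_prob x j (Suc j) * (\<Prod>t<m. match_prob x j (Suc j + Suc t))"
      by (simp only: prod.lessThan_Suc_shift add_0_right)
    also have "(\<Prod>t<m. match_prob x j (Suc j + Suc t)) = 1"
      using m by (intro prod.neutral ballI) (simp add: match_prob_def required_selection)
    also have "match_prob x j (Suc j) = c j / R j"
      using m by (simp add: match_prob_def required_selection lev_selection)
    finally show ?thesis using m by simp
  qed
  have "(\<Prod>k<J. match_prob x j k) = (\<Prod>k<Suc j + (J - Suc j). match_prob x j k)"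
    using j by simp
  also have "\<dots> = R j / R 0 * (c j / R j)"
    by (simp only: prod_lessThan_add selected stopped)
  also have "\<dots> = c j / R 0"
    using R_pos[OF j] by simp
  finally show ?thesis .
qed

lemma exponents_le_K:
  assumes "j < J" "i < n"
  shows "a j i \<le> K" "b j i \<le> K"
proof -
  have "a j i + b j i \<le> (\<Sum>i<n. a j i + b j i)"
    using assms by (intro member_le_sum) simp_all
  also have "\<dots> \<le> K"
    unfolding K_def using assms by (intro member_le_sum[where f = "\<lambda>j. \<Sum>i<n. a j i + b j i"]) simp_all
  finally show "a j i \<le> K" "b j i \<le> K" by simp_all
qed

lemma match_prob_test:
  assumes "t < 2 * K"
  shows "match_prob x j (J + (i * (2 * K) + t)) =
    (if t < K then (if t < a j i then x i else 1) else if t - K < b j i then 1 - x i else 1)"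
  using assms by (simp add: match_prob_def required_lev_test)

lemma prod_match_prob_variable:
  assumes "j < J" "i < n"
  shows "(\<Prod>t<2 * K. match_prob x j (J + (i * (2 * K) + t))) = x i ^ a j i * (1 - x i) ^ b j i"
proof -
  let ?f = "\<lambda>t. match_prob x j (J + (i * (2 * K) + t))"
  have "(\<Prod>t<2 * K. ?f t) = (\<Prod>t<K. ?f t) * (\<Prod>t<K. ?f (K + t))"
    using prod_lessThan_add[of ?f K K] by (simp add: mult_2)
  also have "\<dots> = (\<Prod>t<K. if t < a j i then x i else 1) * (\<Prod>t<K. if t < b j i then 1 - x i else 1)"
    by (intro arg_cong2[where f = times] prod.cong refl) (simp_all add: match_prob_test)
  also have "\<dots> = x i ^ a j i * (1 - x i) ^ b j i"
    using exponents_le_K[OF assms] by (simp add: prod_lessThan_if_less)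
  finally show ?thesis .
qed

lemma round_prob_term:
  assumes "j < J"
  shows "round_prob D lev x (agrees (required j)) = c j / R 0 * bernstein_monomial n (a j) (b j) x"
proof -
  have "round_prob D lev x (agrees (required j)) = (\<Prod>k<J + n * (2 * K). match_prob x j k)"
    unfolding round_prob_agrees by (simp only: D_def)
  also have "\<dots> = (\<Prod>k<J. match_prob x j k) * (\<Prod>k<n * (2 * K). match_prob x j (J + k))"
    by (rule prod_lessThan_add)
  also have "(\<Prod>k<n * (2 * K). match_prob x j (J + k)) =
      (\<Prod>i<n. \<Prod>t<2 * K. match_prob x j (J + (i * (2 * K) + t)))"
    by (rule prod_lessThan_mult)
  also have "\<dots> = bernstein_monomial n (a j) (b j) x"
    unfolding bernstein_monomial_def using assms by (intro prod.cong refl) (simp add: prod_match_prob_variable)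
  finally show ?thesis
    using assms by (simp add: prod_match_prob_selection)
qed

lemma round_prob_terms:
  assumes Js: "Js \<subseteq> {..<J}"
  shows "round_prob D lev x (\<lambda>q. \<exists>j\<in>Js. agrees (required j) q) =
    (\<Sum>j\<in>Js. c j * bernstein_monomial n (a j) (b j) x) / R 0"
proof -
  let ?A = "\<lambda>j. {q. length q = D \<and> agrees (required j) q}"
  let ?f = "\<lambda>q. \<Prod>k<D. edge_prob x (lev k) (q ! k)"
  have "round_prob D lev x (\<lambda>q. \<exists>j\<in>Js. agrees (required j) q) = sum ?f (\<Union>j\<in>Js. ?A j)"
    unfolding round_prob_def by (intro sum.cong) auto
  also have "\<dots> = (\<Sum>j\<in>Js. sum ?f (?A j))"
  proof (rule sum.UNION_disjoint)
    show "finite Js" using Js finite_subset by blast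
    show "\<forall>j\<in>Js. finite (?A j)"
      by (auto intro: finite_subset[OF _ finite_bool_lists_length])
    show "\<forall>j\<in>Js. \<forall>j'\<in>Js. j \<noteq> j' \<longrightarrow> ?A j \<inter> ?A j' = {}"
      using Js agrees_required_unique by blast
  qed
  also have "\<dots> = (\<Sum>j\<in>Js. c j / R 0 * bernstein_monomial n (a j) (b j) x)"
    using Js by (intro sum.cong refl) (auto simp: round_prob_term[unfolded round_prob_def])
  finally show ?thesis
    by (simp add: sum_divide_distrib)
qed

lemma round_prob_out_Some:
  "round_prob D lev x (\<lambda>q. out q = Some v) =
     (\<Sum>j | j < J \<and> lab j = v. c j * bernstein_monomial n (a j) (b j) x) / R 0"
proof -
  have "round_prob D lev x (\<lambda>q. out q = Some v) =
      round_prob D lev x (\<lambda>q. \<exists>j\<in>{j. j < J \<and> lab j = v}. agrees (required j) q)"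
    by (rule round_prob_cong) (auto simp: out_eq_Some_iff)
  also have "\<dots> = (\<Sum>j | j < J \<and> lab j = v. c j * bernstein_monomial n (a j) (b j) x) / R 0"
    by (rule round_prob_terms) auto
  finally show ?thesis .
qed

lemma round_prob_out_not_None:
  "round_prob D lev x (\<lambda>q. out q \<noteq> None) = (\<Sum>j<J. c j * bernstein_monomial n (a j) (b j) x) / R 0"
proof -
  have "round_prob D lev x (\<lambda>q. out q \<noteq> None) =
      round_prob D lev x (\<lambda>q. \<exists>j\<in>{..<J}. agrees (required j) q)"
    by (rule round_prob_cong) (auto simp: out_def)
  also have "\<dots> = (\<Sum>j<J. c j * bernstein_monomial n (a j) (b j) x) / R 0"
    by (rule round_prob_terms) simp
  finally show ?thesis .
qed

lemma rounds_well_formed: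
  assumes "\<And>j. j < J \<Longrightarrow> lab j \<in> V"
  shows "well_formed_factory n V (repeat_rounds D lev out)"
  by (rule well_formed_repeat_rounds[OF D_pos])
    (use lev_valid lev_not_leaf out_SomeD assms in blast)+

lemma rounds_has_sum:
  assumes x: "\<forall>i<n. 0 \<le> x i \<and> x i \<le> 1"
    and pos: "0 < (\<Sum>j<J. c j * bernstein_monomial n (a j) (b j) x)"
  shows "(path_prob x (repeat_rounds D lev out) has_sum 1) (reached_leaves (repeat_rounds D lev out))"
    and "(path_prob x (repeat_rounds D lev out) has_sum
           (\<Sum>j | j < J \<and> lab j = v. c j * bernstein_monomial n (a j) (b j) x) /
           (\<Sum>j<J. c j * bernstein_monomial n (a j) (b j) x))
         (leaves_with (repeat_rounds D lev out) v)"
proof -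
  have nonneg: "0 \<le> edge_prob x (lev k) d" if "k < D" for k d
    using edge_prob_nonneg[OF lev_valid[OF that] x] .
  have stops: "0 < round_prob D lev x (\<lambda>q. out q \<noteq> None)"
    unfolding round_prob_out_not_None using pos R_pos[OF J_pos] by simp
  note rounds = repeat_rounds_has_sum[OF D_pos lev_not_leaf nonneg stops]
  show "(path_prob x (repeat_rounds D lev out) has_sum 1) (reached_leaves (repeat_rounds D lev out))"
    by (rule rounds(1))
  have ratio: "round_prob D lev x (\<lambda>q. out q = Some v) / round_prob D lev x (\<lambda>q. out q \<noteq> None) =
      (\<Sum>j | j < J \<and> lab j = v. c j * bernstein_monomial n (a j) (b j) x) /
      (\<Sum>j<J. c j * bernstein_monomial n (a j) (b j) x)"
    unfolding round_prob_out_Some round_prob_out_not_None using R_pos[OF J_pos] pos by (simp add: field_simps)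
  show "(path_prob x (repeat_rounds D lev out) has_sum
           (\<Sum>j | j < J \<and> lab j = v. c j * bernstein_monomial n (a j) (b j) x) /
           (\<Sum>j<J. c j * bernstein_monomial n (a j) (b j) x))
         (leaves_with (repeat_rounds D lev out) v)"
    using rounds(2)[where v = v] unfolding ratio .
qed

end

lemma bernstein_family_terms:
  fixes P :: "'v \<Rightarrow> (nat \<Rightarrow> real) \<Rightarrow> real"
  assumes "finite V" and "\<And>v. v \<in> V \<Longrightarrow> is_bernstein_poly n (P v)"
  obtains J :: nat and c lab a b
  where "\<And>j. j < J \<Longrightarrow> 0 < c j \<and> lab j \<in> V"
    and "\<And>v x. v \<in> V \<Longrightarrow> P v x = (\<Sum>j | j < J \<and> lab j = v. c j * bernstein_monomial n (a j) (b j) x)"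
    and "\<And>x. (\<Sum>v\<in>V. P v x) = (\<Sum>j<J. c j * bernstein_monomial n (a j) (b j) x)"
proof -
  obtain cs where cs_pos: "\<And>v. v \<in> V \<Longrightarrow> \<forall>(c, a, b) \<in> set (cs v). 0 < c"
    and cs_sum: "\<And>v x. v \<in> V \<Longrightarrow> P v x = (\<Sum>(c, a, b) \<leftarrow> cs v. c * bernstein_monomial n a b x)"
    using assms(2) unfolding is_bernstein_poly_def by metis
  obtain vs where vs: "set vs = V" "distinct vs"
    using finite_distinct_list[OF assms(1)] by blast
  define G where "G = concat (map (\<lambda>v. map (\<lambda>(c, a, b). (c, a, b, v)) (cs v)) vs)"
  define weight where "weight x v e = (case e of (c, a, b, u) \<Rightarrow> if u = v then c * bernstein_monomial n a b x else 0)"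
    for x v and e :: "real \<times> (nat \<Rightarrow> nat) \<times> (nat \<Rightarrow> nat) \<times> 'v"
  define J where "J = length G"
  define c where "c j = fst (G ! j)" for j
  define lab where "lab j = snd (snd (snd (G ! j)))" for j
  define a where "a j = fst (snd (G ! j))" for j
  define b where "b j = fst (snd (snd (G ! j)))" for j
  have terms: "0 < c j \<and> lab j \<in> V" if "j < J" for j
    using that cs_pos vs(1) nth_mem[of j G] by (fastforce simp: G_def J_def c_def lab_def)
  have P_G: "P v x = (\<Sum>e \<leftarrow> G. weight x v e)" if v: "v \<in> V" for v x
  proof -
    have "(\<Sum>e \<leftarrow> G. weight x v e) = (\<Sum>u \<leftarrow> vs. \<Sum>e \<leftarrow> map (\<lambda>(c, a, b). (c, a, b, u)) (cs u). weight x v e)"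
      by (simp add: G_def sum_list_map_concat o_def)
    also have "\<dots> = (\<Sum>u \<leftarrow> vs. if u = v then P v x else 0)"
      using cs_sum[OF v] by (intro arg_cong[where f = sum_list] map_cong refl)
        (auto simp: weight_def case_prod_unfold o_def)
    also have "\<dots> = P v x"
      using vs v assms(1) by (simp add: sum_list_distinct_conv_sum_set)
    finally show ?thesis ..
  qed
  have P_eq: "P v x = (\<Sum>j | j < J \<and> lab j = v. c j * bernstein_monomial n (a j) (b j) x)"
    if "v \<in> V" for v x
    unfolding P_G[OF that] sum_list_sum_nth atLeast0LessThan
    by (simp add: sum.inter_filter[symmetric] weight_def case_prod_unfold J_def c_def lab_def a_def b_def)
  have total: "(\<Sum>v\<in>V. P v x) = (\<Sum>j<J. c j * bernstein_monomial n (a j) (b j) x)" for x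
  proof -
    have "(\<Sum>v\<in>V. P v x) =
        (\<Sum>v\<in>V. \<Sum>j | j \<in> {..<J} \<and> lab j = v. c j * bernstein_monomial n (a j) (b j) x)"
      by (intro sum.cong refl) (simp add: P_eq)
    also have "\<dots> = (\<Sum>j<J. c j * bernstein_monomial n (a j) (b j) x)"
      by (rule sum.group) (use assms(1) terms in auto)
    finally show ?thesis .
  qed
  show ?thesis
    using terms P_eq total by (rule that)
qed

lemma bernstein_terms_factory:
  fixes lab :: "nat \<Rightarrow> 'v"
  assumes terms: "\<And>j. j < J \<Longrightarrow> 0 < c j \<and> lab j \<in> V"
    and cube: "S \<subseteq> {x. \<forall>i<n. 0 \<le> x i \<and> x i \<le> 1}"
    and pos: "\<And>x. x \<in> S \<Longrightarrow> 0 < (\<Sum>j<J. c j * bernstein_monomial n (a j) (b j) x)"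
  shows "\<exists>T :: 'v factory. well_formed_factory n V T \<and> terminates_as_on T S \<and>
    (\<forall>x\<in>S. \<forall>v. outputs_with_prob T x v
       ((\<Sum>j | j < J \<and> lab j = v. c j * bernstein_monomial n (a j) (b j) x) /
        (\<Sum>j<J. c j * bernstein_monomial n (a j) (b j) x)))"
proof (cases "J = 0")
  case True
  then have "S = {}"
    using pos by fastforce
  then show ?thesis
    by (intro exI[of _ "\<lambda>_. Const (1/2)"]) (simp add: well_formed_factory_def terminates_as_on_def)
next
  case False
  interpret bernstein_terms n J c a b lab
    using False terms by unfold_locales auto
  show ?thesis
  proof (intro exI[of _ "repeat_rounds D lev out"] conjI ballI allI)
    show "well_formed_factory n V (repeat_rounds D lev out)"
      using terms by (intro rounds_well_formed) blast
    show "terminates_as_on (repeat_rounds D lev out) S"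
      unfolding terminates_as_on_def using cube pos by (intro ballI rounds_has_sum(1)) auto
    show "outputs_with_prob (repeat_rounds D lev out) x v
        ((\<Sum>j | j < J \<and> lab j = v. c j * bernstein_monomial n (a j) (b j) x) /
         (\<Sum>j<J. c j * bernstein_monomial n (a j) (b j) x))" if "x \<in> S" for x v
      unfolding outputs_with_prob_def using cube pos that by (intro rounds_has_sum(2)) auto
  qed
qed

theorem corollary2p6:
  fixes n :: nat and V :: "'v set" and P :: "'v \<Rightarrow> (nat \<Rightarrow> real) \<Rightarrow> real"
    and S :: "(nat \<Rightarrow> real) set"
  assumes "finite V"
    and "\<And>v. v \<in> V \<Longrightarrow> is_bernstein_poly n (P v)"
    and "S \<subseteq> {x. \<forall>i<n. 0 \<le> x i \<and> x i \<le> 1}"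
    and "\<And>x. x \<in> S \<Longrightarrow> (\<Sum>v\<in>V. P v x) > 0"
  shows "\<exists>T :: 'v factory. well_formed_factory n V T \<and> terminates_as_on T S \<and>
           (\<forall>x\<in>S. \<forall>v\<in>V. outputs_with_prob T x v (P v x / (\<Sum>v'\<in>V. P v' x)))"
proof -
  obtain J :: nat and c lab a b where terms: "\<And>j. j < J \<Longrightarrow> 0 < c j \<and> lab j \<in> V"
    and P_eq: "\<And>v x. v \<in> V \<Longrightarrow>
      P v x = (\<Sum>j | j < J \<and> lab j = v. c j * bernstein_monomial n (a j) (b j) x)"
    and total: "\<And>x. (\<Sum>v\<in>V. P v x) = (\<Sum>j<J. c j * bernstein_monomial n (a j) (b j) x)"
    using bernstein_family_terms[where V = V and n = n and P = P, OF assms(1,2)] by blast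
  have "0 < (\<Sum>j<J. c j * bernstein_monomial n (a j) (b j) x)" if "x \<in> S" for x
    using assms(4)[OF that] by (simp only: total)
  then obtain T :: "'v factory" where wf: "well_formed_factory n V T"
    and stops: "terminates_as_on T S"
    and outputs: "\<forall>x\<in>S. \<forall>v. outputs_with_prob T x v
       ((\<Sum>j | j < J \<and> lab j = v. c j * bernstein_monomial n (a j) (b j) x) /
        (\<Sum>j<J. c j * bernstein_monomial n (a j) (b j) x))"
    using bernstein_terms_factory[where J = J and c = c and lab = lab and n = n and a = a and b = b, OF terms assms(3)] by blast
  show ?thesis
  proof (intro exI[of _ T] conjI ballI wf stops)
    show "outputs_with_prob T x v (P v x / (\<Sum>v'\<in>V. P v' x))" if "x \<in> S" "v \<in> V" for x v
      using outputs that(1) unfolding total P_eq[OF that(2)] by blast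
  qed
qed

end
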